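(* Let $\lambda\in\mathbb R$ with $1+2\lambda\ne0$, and let $\xi$ be a pseudo symmetric measure. Let $\ell=(1,\lambda,\lambda)'$, $\ell_3=(2,-1,-1)'$, $Q_{\xi,3}=\ell_3'V_\xi\ell_3$ and $q_{\xi,3}^*=\ell'V_\xi\ell-(\ell'V_\xi\ell_3)^2\,Q_{\xi,3}^+$ (where $a^+=1/a$ for $a\ne0$ and $0^+=0$). Then for every $\theta\in\mathcal T$ the eigenvalues of $\tilde C_\xi(\theta)$, counted with multiplicity, are $0$ (multiplicity $1$), $(1+2\lambda)^{-2}(t-1)^{-1}q_{\xi,3}^*$ (multiplicity $1$) and $(1+2\lambda)^{-2}(t-1)^{-1}\ell'V_\xi\ell$ (multiplicity $t-2$). Moreover $q_{\xi,3}^*\le\ell'V_\xi\ell$.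
   Context: Fix integers $k\ge 2$ and $t\ge 2$. Let $\mathcal S$ be the set of all $t^k$ sequences $s=(t_1,\dots,t_k)$ with entries $t_j\in\{1,\dots,t\}$. For $s\in\mathcal S$ let $T_s$ be the $k\times t$ matrix with $(j,i)$ entry equal to $1$ if $t_j=i$ and $0$ otherwise; let $H$ be the $k\times k$ matrix with $(i,j)$ entry $1$ if $i\equiv j+1\pmod k$ and $0$ otherwise; put $L_s=HT_s$, $R_s=H'T_s$ (a prime denotes transpose). Let $\Sigma$ be a fixed $k\times k$ positive definite matrix, $1_k$ the all-ones vector, and $\tilde B=\Sigma^{-1}-\Sigma^{-1}1_k1_k'\Sigma^{-1}/(1_k'\Sigma^{-1}1_k)$. With $G_0=T_s,G_1=L_s,G_2=R_s$ define for $0\le i,j\le 2$ the $t\times t$ matrices $C_{sij}=G_i'\tilde BG_j$. A measure is a vector $\xi=(p_s)_{s\in\mathcal S}$ with $p_s\ge0$, $\sum_sp_s=1$. Put $C_{\xi ij}=\sum_sp_sC_{sij}$, $c_{\xi ij}=\operatorname{tr}(C_{\xi ij})$, $V_\xi=(c_{\xi ij})_{0\le i,j\le2}$. The measure $\xi$ is pseudo symmetric if each $C_{\xi ij}$ is completely symmetric, i.e. of the form $aI_t+bJ_t$ with $J_t$ the all-ones matrix. $M^+$ denotes the Moore–Penrose inverse. For $u,w\in\mathbb R^3$ (coordinates indexed $0,1,2$) let $C_\xi[u,w]=\sum_{i,j=0}^2u_iw_jC_{\xi ij}$. Let $\mathcal T=\{x\in\mathbb R^t:1_t'x=0,\ x\ne0\}$.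 For $u\in\mathbb R^3$, vectors $w_1,\dots,w_m\in\mathbb R^3$ ($m\in\{1,2\}$) and $x\in\mathcal T$ define $\mathcal I_\xi(u;w_1,\dots,w_m;x)=C_\xi[u,u]-F'G^+F$, where $F$ is the $m\times t$ matrix whose $a$-th row is $(C_\xi[u,w_a]x)'$ and $G$ is the $m\times m$ matrix with entries $x'C_\xi[w_a,w_b]x$. Undirectional model: the information matrix of $\xi$ for the total treatment effect is $\tilde C_\xi(\theta)=(1+2\lambda)^{-2}\mathcal I_\xi(\ell;\ell_3;\theta)$, $\theta\in\mathcal T$, with $\ell=(1,\lambda,\lambda)'$, $\ell_3=(2,-1,-1)'$. *)

theory Defs
  imports "Jordan_Normal_Form.Char_Poly"
begin

(* Conventions: periods are indexed 0..k-1, treatments 0..t-1 (the paper uses 1..k, 1..t).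
   Matrices are Jordan_Normal_Form matrices ('a mat) with explicit dimensions. *)

definition seqs :: "nat \<Rightarrow> nat \<Rightarrow> nat list set" where
  "seqs k t = {s. length s = k \<and> set s \<subseteq> {..<t}}"

definition Tmat :: "nat \<Rightarrow> nat \<Rightarrow> nat list \<Rightarrow> real mat" where
  "Tmat k t s = mat k t (\<lambda>(j, i). if s ! j = i then 1 else 0)"

definition Hmat :: "nat \<Rightarrow> real mat" where
  "Hmat k = mat k k (\<lambda>(i, j). if i mod k = (j + 1) mod k then 1 else 0)"

definition Lmat :: "nat \<Rightarrow> nat \<Rightarrow> nat list \<Rightarrow> real mat" where
  "Lmat k t s = Hmat k * Tmat k t s"

definition Rmat :: "nat \<Rightarrow> nat \<Rightarrow> nat list \<Rightarrow> real mat" where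
  "Rmat k t s = transpose_mat (Hmat k) * Tmat k t s"

definition Gmat :: "nat \<Rightarrow> nat \<Rightarrow> nat list \<Rightarrow> nat \<Rightarrow> real mat" where
  "Gmat k t s i = (if i = 0 then Tmat k t s else if i = 1 then Lmat k t s else Rmat k t s)"

definition pos_def_mat :: "nat \<Rightarrow> real mat \<Rightarrow> bool" where
  "pos_def_mat n A \<longleftrightarrow> A \<in> carrier_mat n n \<and> transpose_mat A = A \<and>
     (\<forall>x \<in> carrier_vec n. x \<noteq> 0\<^sub>v n \<longrightarrow> x \<bullet> (A *\<^sub>v x) > 0)"

definition mat_inv :: "real mat \<Rightarrow> real mat" where
  "mat_inv A = (THE X. X \<in> carrier_mat (dim_row A) (dim_row A) \<and>
                       A * X = 1\<^sub>m (dim_row A) \<and> X * A = 1\<^sub>m (dim_row A))"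

definition mp_inverse :: "real mat \<Rightarrow> real mat" where
  "mp_inverse A = (THE X. X \<in> carrier_mat (dim_col A) (dim_row A) \<and>
       A * X * A = A \<and> X * A * X = X \<and>
       transpose_mat (A * X) = A * X \<and> transpose_mat (X * A) = X * A)"

definition Btilde :: "nat \<Rightarrow> real mat \<Rightarrow> real mat" where
  "Btilde k Sig = (let Si = mat_inv Sig; one = vec k (\<lambda>_. (1::real)) in
     Si - (1 / (one \<bullet> (Si *\<^sub>v one))) \<cdot>\<^sub>m (Si * mat k k (\<lambda>_. 1) * Si))"

definition Cs :: "nat \<Rightarrow> nat \<Rightarrow> real mat \<Rightarrow> nat list \<Rightarrow> nat \<Rightarrow> nat \<Rightarrow> real mat" where
  "Cs k t Sig s i j = transpose_mat (Gmat k t s i) * Btilde k Sig * Gmat k t s j"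

definition is_measure :: "nat \<Rightarrow> nat \<Rightarrow> (nat list \<Rightarrow> real) \<Rightarrow> bool" where
  "is_measure k t p \<longleftrightarrow> (\<forall>s \<in> seqs k t. p s \<ge> 0) \<and> (\<Sum>s \<in> seqs k t. p s) = 1"

definition Cxi :: "nat \<Rightarrow> nat \<Rightarrow> real mat \<Rightarrow> (nat list \<Rightarrow> real) \<Rightarrow> nat \<Rightarrow> nat \<Rightarrow> real mat" where
  "Cxi k t Sig p i j = mat t t (\<lambda>(a, b). \<Sum>s \<in> seqs k t. p s * (Cs k t Sig s i j) $$ (a, b))"

definition mtrace :: "real mat \<Rightarrow> real" where
  "mtrace A = (\<Sum>i < dim_row A. A $$ (i, i))"

definition Vxi :: "nat \<Rightarrow> nat \<Rightarrow> real mat \<Rightarrow> (nat list \<Rightarrow> real) \<Rightarrow> real mat" where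
  "Vxi k t Sig p = mat 3 3 (\<lambda>(i, j). mtrace (Cxi k t Sig p i j))"

definition completely_symmetric :: "nat \<Rightarrow> real mat \<Rightarrow> bool" where
  "completely_symmetric t A \<longleftrightarrow> (\<exists>a b. A = a \<cdot>\<^sub>m 1\<^sub>m t + b \<cdot>\<^sub>m mat t t (\<lambda>_. 1))"

definition pseudo_symmetric :: "nat \<Rightarrow> nat \<Rightarrow> real mat \<Rightarrow> (nat list \<Rightarrow> real) \<Rightarrow> bool" where
  "pseudo_symmetric k t Sig p \<longleftrightarrow>
     is_measure k t p \<and> (\<forall>i \<le> 2. \<forall>j \<le> 2. completely_symmetric t (Cxi k t Sig p i j))"

definition Cuw :: "nat \<Rightarrow> nat \<Rightarrow> real mat \<Rightarrow> (nat list \<Rightarrow> real) \<Rightarrow> real vec \<Rightarrow> real vec \<Rightarrow> real mat" where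
  "Cuw k t Sig p u w = mat t t (\<lambda>(a, b). \<Sum>i < 3. \<Sum>j < 3. u $ i * w $ j * (Cxi k t Sig p i j) $$ (a, b))"

definition Ixi :: "nat \<Rightarrow> nat \<Rightarrow> real mat \<Rightarrow> (nat list \<Rightarrow> real) \<Rightarrow> real vec \<Rightarrow> real vec list \<Rightarrow> real vec \<Rightarrow> real mat" where
  "Ixi k t Sig p u ws x = (let m = length ws;
      F = mat m t (\<lambda>(a, c). (Cuw k t Sig p u (ws ! a) *\<^sub>v x) $ c);
      G = mat m m (\<lambda>(a, b). x \<bullet> (Cuw k t Sig p (ws ! a) (ws ! b) *\<^sub>v x))
    in Cuw k t Sig p u u - transpose_mat F * mp_inverse G * F)"

definition contrasts :: "nat \<Rightarrow> real vec set" where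
  "contrasts t = {x \<in> carrier_vec t. (\<Sum>i < t. x $ i) = 0 \<and> x \<noteq> 0\<^sub>v t}"

definition ell :: "real \<Rightarrow> real vec" where
  "ell lam = vec_of_list [1, lam, lam]"

definition ell3 :: "real vec" where
  "ell3 = vec_of_list [2, -1, -1]"

(* information matrix for the total treatment effect in the undirectional model *)
definition Ctilde :: "nat \<Rightarrow> nat \<Rightarrow> real mat \<Rightarrow> (nat list \<Rightarrow> real) \<Rightarrow> real \<Rightarrow> real vec \<Rightarrow> real mat" where
  "Ctilde k t Sig p lam theta = (1 / (1 + 2 * lam)^2) \<cdot>\<^sub>m Ixi k t Sig p (ell lam) [ell3] theta"

definition scalar_pinv :: "real \<Rightarrow> real" where
  "scalar_pinv a = (if a = 0 then 0 else 1 / a)"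

definition qform :: "real mat \<Rightarrow> real vec \<Rightarrow> real vec \<Rightarrow> real" where
  "qform V u w = u \<bullet> (V *\<^sub>v w)"

end

theory Submission
  imports Defs
begin

text \<open>
  The matrix \<open>B\<close> annihilates the all-ones vector and every \<open>G\<^sub>i\<close> maps ones to ones, so each
  \<open>C\<^sub>\<xi>\<^sub>i\<^sub>j\<close> has zero row sums. A completely symmetric matrix with zero row sums is a multiple of
  the centering matrix \<open>I - J/t\<close>, the multiple being fixed by the trace; hence
  \<open>C\<^sub>\<xi>[u, w] = u'V\<^sub>\<xi>w/(t - 1) \<cdot> (I - J/t)\<close>, and for a contrast \<open>\<theta>\<close> the information matrix has the
  form \<open>g (I - J/t) - e \<theta>\<theta>'\<close>. Its eigenvectors are \<open>1\<^sub>t\<close>, \<open>\<theta>\<close> and the vectors orthogonal to both;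
  the characteristic polynomial follows from the matrix determinant lemma \<open>det (I + uv') = 1 + v'u\<close>.
  The inequality \<open>q\<^sup>* \<le> \<ell>'V\<^sub>\<xi>\<ell>\<close> holds because \<open>V\<^sub>\<xi>\<close> is positive semidefinite, being an average of
  Gram matrices of the positive semidefinite form \<open>B\<close>.
\<close>

abbreviation ones_vec :: "nat \<Rightarrow> real vec" where
  "ones_vec n \<equiv> vec n (\<lambda>_. 1)"

lemma mult_ones_vec_index:
  "A \<in> carrier_mat m n \<Longrightarrow> a < m \<Longrightarrow> (A *\<^sub>v ones_vec n) $ a = (\<Sum>b<n. A $$ (a, b))"
  by (simp add: scalar_prod_def lessThan_atLeast0)

lemma sum_sum_swap_pairs:
  "(\<Sum>i\<in>A. \<Sum>j\<in>B. \<Sum>x\<in>C. \<Sum>y\<in>D. f i j x y) = (\<Sum>x\<in>C. \<Sum>y\<in>D. \<Sum>i\<in>A. \<Sum>j\<in>B. f i j x y)"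
proof -
  have "(\<Sum>i\<in>A. \<Sum>j\<in>B. \<Sum>x\<in>C. \<Sum>y\<in>D. f i j x y) = (\<Sum>i\<in>A. \<Sum>x\<in>C. \<Sum>j\<in>B. \<Sum>y\<in>D. f i j x y)"
    by (intro sum.cong refl sum.swap)
  also have "\<dots> = (\<Sum>x\<in>C. \<Sum>i\<in>A. \<Sum>y\<in>D. \<Sum>j\<in>B. f i j x y)"
    by (subst sum.swap) (intro sum.cong refl sum.swap)
  also have "\<dots> = (\<Sum>x\<in>C. \<Sum>y\<in>D. \<Sum>i\<in>A. \<Sum>j\<in>B. f i j x y)"
    by (intro sum.cong refl sum.swap)
  finally show ?thesis .
qed

lemma qform_eq_double_sum:
  assumes "V \<in> carrier_mat n n" "u \<in> carrier_vec n" "w \<in> carrier_vec n"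
  shows "qform V u w = (\<Sum>i<n. \<Sum>j<n. u $ i * w $ j * V $$ (i, j))"
  using assms
  by (simp add: qform_def scalar_prod_def lessThan_atLeast0 sum_distrib_left algebra_simps)

lemma det_one_plus_mult_commute:
  fixes U W :: "'a :: idom mat"
  assumes U: "U \<in> carrier_mat n m" and W: "W \<in> carrier_mat m n"
  shows "det (1\<^sub>m n + U * W) = det (1\<^sub>m m + W * U)"
proof -
  \<comment> \<open>Both sides are \<open>det A\<close>: block elimination from the left by \<open>L1\<close> or by \<open>L2\<close>.\<close>
  define A where "A = four_block_mat (1\<^sub>m n) U (- W) (1\<^sub>m m)"
  define L1 where "L1 = four_block_mat (1\<^sub>m n) (- U) (0\<^sub>m m n) (1\<^sub>m m)"
  define L2 where "L2 = four_block_mat (1\<^sub>m n) (0\<^sub>m n m) W (1\<^sub>m m)"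
  have A: "A \<in> carrier_mat (n + m) (n + m)"
    and L1: "L1 \<in> carrier_mat (n + m) (n + m)" and L2: "L2 \<in> carrier_mat (n + m) (n + m)"
    unfolding A_def L1_def L2_def using U W by auto
  have "L1 * A = four_block_mat (1\<^sub>m n + U * W) (0\<^sub>m n m) (- W) (1\<^sub>m m)"
    unfolding L1_def A_def using U W
    by (subst mult_four_block_mat[of _ n n _ m _ m _ _ n _ m]) (auto intro!: eq_matI simp: scalar_prod_def)
  hence "det L1 * det A = det (1\<^sub>m n + U * W)"
    using U W det_mult[OF L1 A] by (simp add: det_four_block_mat_upper_right_zero[of _ n _ m])
  moreover have "L2 * A = four_block_mat (1\<^sub>m n) U (0\<^sub>m m n) (1\<^sub>m m + W * U)"
    unfolding L2_def A_def using U W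
    by (subst mult_four_block_mat[of _ n n _ m _ m _ _ n _ m]) (auto intro!: eq_matI simp: scalar_prod_def)
  hence "det L2 * det A = det (1\<^sub>m m + W * U)"
    using U W det_mult[OF L2 A] by (simp add: det_four_block_mat_lower_left_zero[of _ n _ m])
  moreover have "det L1 = 1" "det L2 = 1" unfolding L1_def L2_def using U W
    by (simp_all add: det_four_block_mat_lower_left_zero[of _ n _ m]
        det_four_block_mat_upper_right_zero[of _ n _ m])
  ultimately show ?thesis by simp
qed

lemma det_one_plus_rank_one:
  fixes u v :: "nat \<Rightarrow> 'a :: idom"
  shows "det (1\<^sub>m n + mat n n (\<lambda>(i, j). u i * v j)) = 1 + (\<Sum>i<n. v i * u i)"
proof -
  define U where "U = mat n 1 (\<lambda>(i, _). u i)"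
  define W where "W = mat 1 n (\<lambda>(_, j). v j)"
  have U: "U \<in> carrier_mat n 1" and W: "W \<in> carrier_mat 1 n" unfolding U_def W_def by auto
  have "U * W = mat n n (\<lambda>(i, j). u i * v j)"
    by (rule eq_matI) (auto simp: U_def W_def scalar_prod_def)
  moreover have "det (1\<^sub>m 1 + W * U) = 1 + (\<Sum>i<n. v i * u i)"
    using U W by (subst det_single) (auto simp: U_def W_def scalar_prod_def lessThan_atLeast0)
  ultimately show ?thesis using det_one_plus_mult_commute[OF U W] by simp
qed

lemma poly_eqI_off_point:
  fixes p q :: "'a :: {idom, ring_char_0} poly"
  assumes "\<And>x. x \<noteq> c \<Longrightarrow> poly p x = poly q x"
  shows "p = q"
proof (rule ccontr)
  assume "p \<noteq> q"
  hence "finite {x. poly (p - q) x = 0}" by (intro poly_roots_finite) simp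
  moreover have "UNIV - {c} \<subseteq> {x. poly (p - q) x = 0}" using assms by auto
  ultimately have "finite (UNIV - {c} :: 'a set)" by (rule finite_subset[rotated])
  thus False using infinite_UNIV_char_0[where 'a = 'a] by simp
qed

lemma mp_inverse_1x1: "mp_inverse (mat 1 1 (\<lambda>_. z)) = mat 1 1 (\<lambda>_. scalar_pinv z)"
proof -
  let ?A = "mat 1 1 (\<lambda>_. z) :: real mat"
  let ?X = "mat 1 1 (\<lambda>_. scalar_pinv z) :: real mat"
  have one: "\<And>i. i < (1::nat) \<longleftrightarrow> i = 0" by auto
  show ?thesis unfolding mp_inverse_def
  proof (rule the_equality)
    show "?X \<in> carrier_mat (dim_col ?A) (dim_row ?A) \<and> ?A * ?X * ?A = ?A \<and> ?X * ?A * ?X = ?X \<and>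
       transpose_mat (?A * ?X) = ?A * ?X \<and> transpose_mat (?X * ?A) = ?X * ?A"
      by (auto intro!: eq_matI simp: scalar_prod_def one scalar_pinv_def)
  next
    fix X assume X: "X \<in> carrier_mat (dim_col ?A) (dim_row ?A) \<and> ?A * X * ?A = ?A \<and> X * ?A * X = X \<and>
       transpose_mat (?A * X) = ?A * X \<and> transpose_mat (X * ?A) = X * ?A"
    hence Xc: "X \<in> carrier_mat 1 1" by simp
    have "(?A * X * ?A) $$ (0, 0) = ?A $$ (0, 0)" "(X * ?A * X) $$ (0, 0) = X $$ (0, 0)"
      using X by simp_all
    hence "z * X $$ (0, 0) * z = z" "X $$ (0, 0) * z * X $$ (0, 0) = X $$ (0, 0)"
      using Xc by (simp_all add: scalar_prod_def)
    hence "X $$ (0, 0) = scalar_pinv z"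
      by (cases "z = 0") (simp_all add: scalar_pinv_def field_simps)
    thus "X = ?X" using Xc by (intro eq_matI) (auto simp: one)
  qed
qed


section \<open>The centering matrix\<close>

definition centering_mat :: "nat \<Rightarrow> real mat" where
  "centering_mat n = 1\<^sub>m n - (1 / real n) \<cdot>\<^sub>m mat n n (\<lambda>_. 1)"

lemma centering_mat_carrier [simp]: "centering_mat n \<in> carrier_mat n n"
  unfolding centering_mat_def by (intro minus_carrier_mat) auto

lemma dim_centering_mat [simp]:
  "dim_row (centering_mat n) = n" "dim_col (centering_mat n) = n"
  by (simp_all add: centering_mat_def)

lemma index_centering_mat [simp]:
  "a < n \<Longrightarrow> b < n \<Longrightarrow> centering_mat n $$ (a, b) = (if a = b then 1 else 0) - 1 / real n"
  by (simp add: centering_mat_def)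

lemma centering_mat_mult_vec:
  assumes x: "x \<in> carrier_vec n" and sum_x: "(\<Sum>i<n. x $ i) = 0"
  shows "centering_mat n *\<^sub>v x = x"
proof (rule eq_vecI)
  fix a assume "a < dim_vec x"
  hence a: "a < n" using x by simp
  have delta: "\<And>P z. (if P then 1 else 0) * z = (if P then z else (0::real))" by simp
  have "(centering_mat n *\<^sub>v x) $ a = (\<Sum>b<n. (if a = b then x $ b else 0)) - (\<Sum>b<n. x $ b) / real n"
    using x a by (simp add: scalar_prod_def lessThan_atLeast0 left_diff_distrib sum_subtractf sum_divide_distrib delta)
  thus "(centering_mat n *\<^sub>v x) $ a = x $ a" using a sum_x by simp
qed (use x in simp)

lemma contrast_scalar_prod_pos:
  assumes "x \<in> contrasts n"
  shows "x \<bullet> x > (0::real)"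
proof -
  have x: "x \<in> carrier_vec n" and "x \<noteq> 0\<^sub>v n" using assms by (auto simp: contrasts_def)
  then obtain i where i: "i < n" "x $ i \<noteq> 0" by (metis eq_vecI carrier_vecD index_zero_vec)
  have "x \<bullet> x = (\<Sum>j<n. x $ j * x $ j)" using x by (simp add: scalar_prod_def lessThan_atLeast0)
  also have "\<dots> > 0" using i by (intro sum_pos2[of _ i]) (auto simp: zero_less_mult_iff linorder_neq_iff)
  finally show ?thesis .
qed

lemma completely_symmetric_eq_centering_mat:
  assumes t: "t \<ge> 2" and cs: "completely_symmetric t A" and row_sums: "A *\<^sub>v ones_vec t = 0\<^sub>v t"
  shows "A = (mtrace A / (real t - 1)) \<cdot>\<^sub>m centering_mat t"
proof -
  obtain \<alpha> \<beta> where A: "A = \<alpha> \<cdot>\<^sub>m 1\<^sub>m t + \<beta> \<cdot>\<^sub>m mat t t (\<lambda>_. 1)"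
    using cs unfolding completely_symmetric_def by blast
  have "0 = (A *\<^sub>v ones_vec t) $ 0" using row_sums t by simp
  also have "\<dots> = (\<Sum>b<t. (if b = 0 then \<alpha> else 0) + \<beta>)"
    using t by (subst mult_ones_vec_index[of _ t t]) (auto simp: A intro!: sum.cong)
  also have "\<dots> = \<alpha> + real t * \<beta>" using t by (simp add: sum.distrib)
  finally have \<beta>: "\<beta> = - \<alpha> / real t" using t by (simp add: field_simps)
  have "mtrace A = real t * (\<alpha> + \<beta>)" by (simp add: mtrace_def A)
  also have "\<dots> = \<alpha> * (real t - 1)" using t by (simp add: \<beta> field_simps)
  finally have "\<alpha> = mtrace A / (real t - 1)" using t by simp
  moreover have "A = \<alpha> \<cdot>\<^sub>m centering_mat t"
    using \<beta> t by (intro eq_matI) (auto simp: A field_simps)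
  ultimately show ?thesis by simp
qed

lemma shifted_centering_minus_rank_one_factor:
  assumes n: "n > 0" and x: "x \<in> carrier_vec n" and sum_x: "(\<Sum>i<n. x $ i) = 0" and y: "y \<noteq> 0"
  shows "(g + y) \<cdot>\<^sub>m 1\<^sub>m n - (g \<cdot>\<^sub>m centering_mat n - e \<cdot>\<^sub>m mat n n (\<lambda>(a, b). x $ a * x $ b)) =
    y \<cdot>\<^sub>m ((1\<^sub>m n + mat n n (\<lambda>(a, b). g / (real n * y) * 1))
          * (1\<^sub>m n + mat n n (\<lambda>(a, b). (e / y * x $ a) * x $ b)))"
proof -
  \<comment> \<open>The cross term \<open>J x x'\<close> of the product vanishes because \<open>x\<close> is orthogonal to the ones vector.\<close>
  define c d where "c = g / (real n * y)" and "d = e / y"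
  let ?M1 = "1\<^sub>m n + mat n n (\<lambda>(a, b). c * 1)" and ?M2 = "1\<^sub>m n + mat n n (\<lambda>(a, b). (d * x $ a) * x $ b)"
  let ?\<delta> = "\<lambda>l a. if l = a then 1 else (0::real)"
  have "(?M1 * ?M2) $$ (a, b) = ?\<delta> a b + d * x $ a * x $ b + c" if a: "a < n" and b: "b < n" for a b
  proof -
    have "(?M1 * ?M2) $$ (a, b) = (\<Sum>l<n. (?\<delta> l a + c) * (?\<delta> l b + d * x $ l * x $ b))"
      using a b by (simp add: scalar_prod_def lessThan_atLeast0 mult.assoc)
    also have "\<dots> = (\<Sum>l<n. ?\<delta> l a * ?\<delta> l b) + (\<Sum>l<n. ?\<delta> l a * (d * x $ l * x $ b))
        + (\<Sum>l<n. c * ?\<delta> l b) + c * d * x $ b * (\<Sum>l<n. x $ l)"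
      by (simp add: algebra_simps sum.distrib sum_distrib_left sum_distrib_right)
    also have "\<dots> = ?\<delta> a b + d * x $ a * x $ b + c"
    proof -
      have "\<And>P (z::real). (if P then 1 else 0) * z = (if P then z else 0)"
        "\<And>P (z::real). z * (if P then 1 else 0) = (if P then z else 0)" by auto
      thus ?thesis using a b sum_x by (simp add: sum.delta sum.delta')
    qed
    finally show ?thesis .
  qed
  hence "(g + y) \<cdot>\<^sub>m 1\<^sub>m n - (g \<cdot>\<^sub>m centering_mat n - e \<cdot>\<^sub>m mat n n (\<lambda>(a, b). x $ a * x $ b)) =
      y \<cdot>\<^sub>m (?M1 * ?M2)"
    using n y by (intro eq_matI) (auto simp: c_def d_def field_simps)
  thus ?thesis by (simp add: c_def d_def)
qed

lemma char_poly_centering_minus_rank_one: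
  assumes n: "n \<ge> 2" and x: "x \<in> carrier_vec n" and sum_x: "(\<Sum>i<n. x $ i) = 0"
  shows "char_poly (g \<cdot>\<^sub>m centering_mat n - e \<cdot>\<^sub>m mat n n (\<lambda>(a, b). x $ a * x $ b))
     = [:0, 1:] * [:- (g - e * (x \<bullet> x)), 1:] * [:- g, 1:] ^ (n - 2)"
    (is "char_poly ?C = ?p")
proof (rule poly_eqI_off_point[where c = g])
  fix z :: real assume "z \<noteq> g"
  define y where "y = z - g"
  have y: "y \<noteq> 0" and z: "z = g + y" using \<open>z \<noteq> g\<close> by (auto simp: y_def)
  have C: "?C \<in> carrier_mat n n" by auto
  have xx: "x \<bullet> x = (\<Sum>i<n. x $ i * x $ i)" using x by (simp add: scalar_prod_def lessThan_atLeast0)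
  have "- char_matrix ?C z = z \<cdot>\<^sub>m 1\<^sub>m n - ?C"
    by (rule eq_matI) (auto simp: char_matrix_def)
  hence "poly (char_poly ?C) z = y ^ n * ((1 + g / y) * (1 + e * (x \<bullet> x) / y))"
    using char_poly_matrix[OF C, of z] y n
      shifted_centering_minus_rank_one_factor[OF _ x sum_x y, of g e, folded z]
      det_one_plus_rank_one[of n "\<lambda>_. g / (real n * y)" "\<lambda>_. 1"]
      det_one_plus_rank_one[of n "\<lambda>a. e / y * x $ a" "\<lambda>b. x $ b"]
    by (simp add: det_mult[of _ n] xx sum_distrib_left sum_divide_distrib algebra_simps)
  also have "\<dots> = y ^ (n - 2) * ((y + g) * (y + e * (x \<bullet> x)))"
  proof -
    have "y ^ n = y ^ (n - 2) * y\<^sup>2" using n by (metis le_add_diff_inverse2 power_add)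
    thus ?thesis using y by (simp add: field_simps power2_eq_square)
  qed
  also have "\<dots> = poly ?p z" by (simp add: z algebra_simps)
  finally show "poly (char_poly ?C) z = poly ?p z" .
qed


section \<open>Positive definite matrices\<close>

lemma mat_inv_pos_def_mat:
  assumes "pos_def_mat k A"
  shows "mat_inv A \<in> carrier_mat k k" "A * mat_inv A = 1\<^sub>m k" "mat_inv A * A = 1\<^sub>m k"
proof -
  have A: "A \<in> carrier_mat k k"
    and pos: "\<And>x. x \<in> carrier_vec k \<Longrightarrow> x \<noteq> 0\<^sub>v k \<Longrightarrow> x \<bullet> (A *\<^sub>v x) > 0"
    using assms unfolding pos_def_mat_def by auto
  have "det A \<noteq> 0"
  proof
    assume "det A = 0"
    then obtain v where "v \<in> carrier_vec k" "v \<noteq> 0\<^sub>v k" "A *\<^sub>v v = 0\<^sub>v k"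
      using det_0_iff_vec_prod_zero_field[OF A] by auto
    thus False using pos[of v] by simp
  qed
  then obtain B where B: "B \<in> carrier_mat k k" "B * A = 1\<^sub>m k" "A * B = 1\<^sub>m k"
    using det_non_zero_imp_unit[OF A, of "()"] unfolding Units_def ring_mat_simps by auto
  have "mat_inv A = B" unfolding mat_inv_def
  proof (rule the_equality)
    fix X assume X: "X \<in> carrier_mat (dim_row A) (dim_row A) \<and> A * X = 1\<^sub>m (dim_row A) \<and> X * A = 1\<^sub>m (dim_row A)"
    hence Xc: "X \<in> carrier_mat k k" using A by simp
    hence "X = X * (A * B)" using B by (simp add: right_mult_one_mat[OF Xc])
    also have "\<dots> = (X * A) * B" by (rule assoc_mult_mat[OF Xc A B(1), symmetric])
    also have "\<dots> = B" using X A B by simp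
    finally show "X = B" .
  qed (use A B in auto)
  thus "mat_inv A \<in> carrier_mat k k" "A * mat_inv A = 1\<^sub>m k" "mat_inv A * A = 1\<^sub>m k" using B by auto
qed

lemma pos_def_mat_mat_inv:
  assumes pd: "pos_def_mat k A"
  shows "pos_def_mat k (mat_inv A)"
proof -
  have A: "A \<in> carrier_mat k k" and sym: "transpose_mat A = A"
    and pos: "\<And>x. x \<in> carrier_vec k \<Longrightarrow> x \<noteq> 0\<^sub>v k \<Longrightarrow> x \<bullet> (A *\<^sub>v x) > 0"
    using pd unfolding pos_def_mat_def by auto
  note inv = mat_inv_pos_def_mat[OF pd]
  let ?B = "mat_inv A"
  have "transpose_mat ?B * A = 1\<^sub>m k"
    using transpose_mult[OF A inv(1)] inv sym by simp
  have "transpose_mat ?B = transpose_mat ?B * (A * ?B)" using inv by simp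
  also have "\<dots> = (transpose_mat ?B * A) * ?B" using A inv by (simp add: assoc_mult_mat)
  finally have "transpose_mat ?B = ?B" using \<open>transpose_mat ?B * A = 1\<^sub>m k\<close> inv by simp
  moreover have "x \<bullet> (?B *\<^sub>v x) > 0" if x: "x \<in> carrier_vec k" "x \<noteq> 0\<^sub>v k" for x
  proof -
    define y where "y = ?B *\<^sub>v x"
    have y: "y \<in> carrier_vec k" and x_eq: "x = A *\<^sub>v y"
      unfolding y_def using A inv x by (auto simp flip: assoc_mult_mat_vec)
    have "x \<bullet> (?B *\<^sub>v x) = (A *\<^sub>v y) \<bullet> y" by (simp add: y_def[symmetric] x_eq[symmetric])
    also have "\<dots> = y \<bullet> (A *\<^sub>v y)" using transpose_vec_mult_scalar[OF A y y] sym by simp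
    finally have "x \<bullet> (?B *\<^sub>v x) = y \<bullet> (A *\<^sub>v y)" .
    moreover have "y \<noteq> 0\<^sub>v k" using x x_eq A by auto
    ultimately show ?thesis using pos[OF y] by simp
  qed
  ultimately show ?thesis using inv unfolding pos_def_mat_def by blast
qed

lemma pos_def_mat_quadratic_form_nonneg:
  assumes "pos_def_mat k A"
  shows "(\<Sum>i<k. \<Sum>j<k. h i * A $$ (i, j) * h j) \<ge> 0"
proof -
  have A: "A \<in> carrier_mat k k" using assms by (simp add: pos_def_mat_def)
  have "(\<Sum>i<k. \<Sum>j<k. h i * A $$ (i, j) * h j) = vec k h \<bullet> (A *\<^sub>v vec k h)"
    using A by (simp add: scalar_prod_def lessThan_atLeast0 sum_distrib_left mult.assoc)
  also have "\<dots> \<ge> 0"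
  proof (cases "vec k h = 0\<^sub>v k")
    case False
    thus ?thesis using assms unfolding pos_def_mat_def by (simp add: less_imp_le)
  qed (use A in simp)
  finally show ?thesis .
qed

lemma pos_def_mat_sum_pos:
  assumes "pos_def_mat k A" and "k > 0"
  shows "(\<Sum>i<k. \<Sum>j<k. A $$ (i, j)) > 0"
proof -
  have A: "A \<in> carrier_mat k k" using assms by (simp add: pos_def_mat_def)
  have "ones_vec k $ 0 \<noteq> 0\<^sub>v k $ 0" using assms(2) by simp
  hence "ones_vec k \<noteq> 0\<^sub>v k" by auto
  hence "ones_vec k \<bullet> (A *\<^sub>v ones_vec k) > 0"
    using assms(1) unfolding pos_def_mat_def by auto
  thus ?thesis using A by (simp add: scalar_prod_def lessThan_atLeast0)
qed

lemma quadratic_form_row_sum_deflation_nonneg: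
  fixes S :: "nat \<Rightarrow> nat \<Rightarrow> real"
  assumes sym: "\<And>i j. i < K \<Longrightarrow> j < K \<Longrightarrow> S i j = S j i"
    and psd: "\<And>h. (\<Sum>i<K. \<Sum>j<K. h i * S i j * h j) \<ge> 0"
    and sum_pos: "(\<Sum>i<K. \<Sum>j<K. S i j) > 0"
  defines "r i \<equiv> \<Sum>l<K. S i l" and "c \<equiv> \<Sum>i<K. \<Sum>j<K. S i j"
  shows "(\<Sum>i<K. \<Sum>j<K. g i * (S i j - r i * r j / c) * g j) \<ge> 0"
proof -
  \<comment> \<open>Completing the square: the deflated form at \<open>g\<close> is the form of \<open>S\<close> at \<open>g - \<mu>\<close>.\<close>
  define m where "m = (\<Sum>i<K. g i * r i)"
  define q where "q = (\<Sum>i<K. \<Sum>j<K. g i * S i j * g j)"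
  define \<mu> where "\<mu> = m / c"
  have c: "c > 0" using sum_pos by (simp add: c_def)
  have m1: "(\<Sum>i<K. \<Sum>j<K. g i * S i j) = m"
    by (simp add: m_def r_def sum_distrib_left)
  have m2: "(\<Sum>i<K. \<Sum>j<K. S i j * g j) = m"
  proof -
    have "(\<Sum>i<K. \<Sum>j<K. S i j * g j) = (\<Sum>j<K. \<Sum>i<K. g j * S j i)"
      by (subst sum.swap) (intro sum.cong refl, simp add: sym mult.commute)
    thus ?thesis by (simp add: m1)
  qed
  have "(\<Sum>i<K. \<Sum>j<K. (g i - \<mu>) * S i j * (g j - \<mu>))
      = (\<Sum>i<K. \<Sum>j<K. g i * S i j * g j - \<mu> * (g i * S i j) - \<mu> * (S i j * g j) + \<mu> * \<mu> * S i j)"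
    by (intro sum.cong refl) (simp add: algebra_simps)
  also have "\<dots> = q - \<mu> * m - \<mu> * m + \<mu> * \<mu> * c"
    by (simp add: q_def c_def sum.distrib sum_subtractf sum_distrib_left[symmetric] m1 m2 m_def r_def)
  also have "\<dots> = q - m * m / c" using c by (simp add: \<mu>_def field_simps)
  finally have shifted: "(\<Sum>i<K. \<Sum>j<K. (g i - \<mu>) * S i j * (g j - \<mu>)) = q - m * m / c" .
  have "(\<Sum>i<K. \<Sum>j<K. g i * (S i j - r i * r j / c) * g j)
      = (\<Sum>i<K. \<Sum>j<K. g i * S i j * g j - ((g i * r i) * (g j * r j)) / c)"
    by (intro sum.cong refl) (simp add: algebra_simps)
  also have "\<dots> = q - m * m / c"
    by (simp add: q_def m_def sum_subtractf sum_divide_distrib[symmetric] sum_product)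
  finally show ?thesis using shifted psd[of "\<lambda>i. g i - \<mu>"] by simp
qed

context
  fixes k :: nat and Sig :: "real mat"
  assumes pd: "pos_def_mat k Sig"
begin

lemma Btilde_carrier: "Btilde k Sig \<in> carrier_mat k k"
  using mat_inv_pos_def_mat(1)[OF pd] unfolding Btilde_def Let_def by auto

lemma index_Btilde:
  assumes "i < k" "j < k"
  defines "S \<equiv> mat_inv Sig"
  shows "Btilde k Sig $$ (i, j) =
    S $$ (i, j) - (\<Sum>l<k. S $$ (i, l)) * (\<Sum>l<k. S $$ (j, l)) / (\<Sum>a<k. \<Sum>b<k. S $$ (a, b))"
proof -
  have S: "S \<in> carrier_mat k k" and sym: "\<And>a b. a < k \<Longrightarrow> b < k \<Longrightarrow> S $$ (b, a) = S $$ (a, b)"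
    using pos_def_mat_mat_inv[OF pd] unfolding S_def pos_def_mat_def
    by (auto simp: mat_eq_iff)
  have "(S * mat k k (\<lambda>_. 1) * S) $$ (i, j) = (\<Sum>b<k. (\<Sum>l<k. S $$ (i, l)) * S $$ (b, j))"
    using S assms by (simp add: scalar_prod_def lessThan_atLeast0)
  also have "\<dots> = (\<Sum>l<k. S $$ (i, l)) * (\<Sum>l<k. S $$ (j, l))"
    using sym assms by (simp add: sum_distrib_left[symmetric])
  finally show ?thesis
    using S assms unfolding Btilde_def Let_def S_def[symmetric]
    by (simp add: scalar_prod_def lessThan_atLeast0)
qed

lemma Btilde_mult_ones: "Btilde k Sig *\<^sub>v ones_vec k = 0\<^sub>v k"
proof (rule eq_vecI)
  fix i assume "i < dim_vec (0\<^sub>v k :: real vec)"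
  hence i: "i < k" by simp
  let ?S = "mat_inv Sig"
  have "(\<Sum>a<k. \<Sum>b<k. ?S $$ (a, b)) > 0"
    using i by (intro pos_def_mat_sum_pos[OF pos_def_mat_mat_inv[OF pd]]) simp
  hence "(\<Sum>j<k. Btilde k Sig $$ (i, j)) = 0"
    using i by (simp add: index_Btilde sum_subtractf sum_distrib_left[symmetric] sum_divide_distrib[symmetric])
  thus "(Btilde k Sig *\<^sub>v ones_vec k) $ i = 0\<^sub>v k $ i"
    using i by (simp add: mult_ones_vec_index[OF Btilde_carrier i])
qed (use Btilde_carrier in simp)

lemma Btilde_quadratic_form_nonneg: "(\<Sum>i<k. \<Sum>j<k. g i * Btilde k Sig $$ (i, j) * g j) \<ge> 0"
proof (cases "k = 0")
  case False
  let ?S = "\<lambda>i j. mat_inv Sig $$ (i, j)"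
  have "(\<Sum>i<k. \<Sum>j<k. g i * ?S i j * g j) \<ge> 0" for g
    by (rule pos_def_mat_quadratic_form_nonneg[OF pos_def_mat_mat_inv[OF pd]])
  moreover have "?S i j = ?S j i" if "i < k" "j < k" for i j
    using pos_def_mat_mat_inv[OF pd] that unfolding pos_def_mat_def by (auto simp: mat_eq_iff)
  ultimately show ?thesis
    using quadratic_form_row_sum_deflation_nonneg[of k ?S g]
      pos_def_mat_sum_pos[OF pos_def_mat_mat_inv[OF pd]] False
    by (simp add: index_Btilde)
qed simp

end


section \<open>Design matrices\<close>

lemma Hmat_carrier: "Hmat k \<in> carrier_mat k k"
  by (simp add: Hmat_def)

lemma Hmat_mult_ones: "Hmat k *\<^sub>v ones_vec k = ones_vec k"
proof (rule eq_vecI)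
  fix q assume "q < dim_vec (ones_vec k)"
  hence q: "q < k" by simp
  define l\<^sub>0 where "l\<^sub>0 = (if q = 0 then k - 1 else q - 1)"
  have "q = Suc l mod k \<longleftrightarrow> l = l\<^sub>0" if "l < k" for l
    using q that by (cases "Suc l = k") (auto simp: l\<^sub>0_def)
  hence "(Hmat k *\<^sub>v ones_vec k) $ q = (\<Sum>l<k. if l = l\<^sub>0 then 1 else 0)"
    using q by (subst mult_ones_vec_index[OF Hmat_carrier q], intro sum.cong) (auto simp: Hmat_def)
  also have "\<dots> = 1" using q by (auto simp: l\<^sub>0_def)
  finally show "(Hmat k *\<^sub>v ones_vec k) $ q = ones_vec k $ q" using q by simp
qed (simp add: Hmat_def)

lemma transpose_Hmat_mult_ones: "transpose_mat (Hmat k) *\<^sub>v ones_vec k = ones_vec k"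
proof (rule eq_vecI)
  fix l assume "l < dim_vec (ones_vec k)"
  hence l: "l < k" by simp
  have "(transpose_mat (Hmat k) *\<^sub>v ones_vec k) $ l = (\<Sum>q<k. if q = (l + 1) mod k then 1 else 0)"
    using l by (subst mult_ones_vec_index[OF transpose_carrier_mat[THEN iffD2, OF Hmat_carrier] l],
        intro sum.cong) (auto simp: Hmat_def)
  also have "\<dots> = 1" using l by simp
  finally show "(transpose_mat (Hmat k) *\<^sub>v ones_vec k) $ l = ones_vec k $ l" using l by simp
qed (simp add: Hmat_def)

lemma Tmat_carrier: "Tmat k t s \<in> carrier_mat k t"
  by (simp add: Tmat_def)

lemma Tmat_mult_ones:
  assumes "s \<in> seqs k t"
  shows "Tmat k t s *\<^sub>v ones_vec t = ones_vec k"
proof (rule eq_vecI)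
  fix q assume "q < dim_vec (ones_vec k)"
  hence q: "q < k" by simp
  have "s ! q \<in> set s" using assms q by (simp add: seqs_def)
  hence "s ! q < t" using assms by (auto simp: seqs_def)
  hence "(Tmat k t s *\<^sub>v ones_vec t) $ q = 1"
    using q by (subst mult_ones_vec_index[OF Tmat_carrier q]) (simp add: Tmat_def)
  thus "(Tmat k t s *\<^sub>v ones_vec t) $ q = ones_vec k $ q" using q by simp
qed (simp add: Tmat_def)

lemma Gmat_carrier: "Gmat k t s i \<in> carrier_mat k t"
  using Hmat_carrier[of k] Tmat_carrier[of k t s]
  by (auto simp: Gmat_def Lmat_def Rmat_def)

lemma Gmat_mult_ones:
  assumes "s \<in> seqs k t"
  shows "Gmat k t s i *\<^sub>v ones_vec t = ones_vec k"
  using Tmat_mult_ones[OF assms] Hmat_mult_ones transpose_Hmat_mult_ones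
    Hmat_carrier[of k] Tmat_carrier[of k t s]
  by (auto simp: Gmat_def Lmat_def Rmat_def)

lemma Cs_carrier: "pos_def_mat k Sig \<Longrightarrow> Cs k t Sig s i j \<in> carrier_mat t t"
  unfolding Cs_def
  by (rule mult_carrier_mat[OF mult_carrier_mat[OF transpose_carrier_mat[THEN iffD2, OF Gmat_carrier]
        Btilde_carrier] Gmat_carrier])

lemma Cs_mult_ones:
  assumes pd: "pos_def_mat k Sig" and s: "s \<in> seqs k t"
  shows "Cs k t Sig s i j *\<^sub>v ones_vec t = 0\<^sub>v t"
proof -
  have Gi: "transpose_mat (Gmat k t s i) \<in> carrier_mat t k" and Gj: "Gmat k t s j \<in> carrier_mat k t"
    and B: "Btilde k Sig \<in> carrier_mat k k"
    using Gmat_carrier Btilde_carrier[OF pd] by auto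
  have "Cs k t Sig s i j *\<^sub>v ones_vec t
      = transpose_mat (Gmat k t s i) *\<^sub>v (Btilde k Sig *\<^sub>v (Gmat k t s j *\<^sub>v ones_vec t))"
    unfolding Cs_def assoc_mult_mat_vec[OF mult_carrier_mat[OF Gi B] Gj vec_carrier]
    by (rule assoc_mult_mat_vec[OF Gi B mult_mat_vec_carrier[OF Gj vec_carrier]])
  thus ?thesis using Gi by (auto simp: Gmat_mult_ones[OF s] Btilde_mult_ones[OF pd])
qed

lemma Cxi_mult_ones:
  assumes pd: "pos_def_mat k Sig"
  shows "Cxi k t Sig p i j *\<^sub>v ones_vec t = 0\<^sub>v t"
proof (rule eq_vecI)
  fix a assume "a < dim_vec (0\<^sub>v t :: real vec)"
  hence a: "a < t" by simp
  have "(Cxi k t Sig p i j *\<^sub>v ones_vec t) $ a = (\<Sum>b<t. \<Sum>s\<in>seqs k t. p s * Cs k t Sig s i j $$ (a, b))"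
    using a by (subst mult_ones_vec_index[of _ t t]) (simp_all add: Cxi_def)
  also have "\<dots> = (\<Sum>s\<in>seqs k t. p s * (\<Sum>b<t. Cs k t Sig s i j $$ (a, b)))"
    by (subst sum.swap) (simp add: sum_distrib_left)
  also have "\<dots> = 0"
  proof (intro sum.neutral ballI)
    fix s assume "s \<in> seqs k t"
    thus "p s * (\<Sum>b<t. Cs k t Sig s i j $$ (a, b)) = 0"
      using Cs_mult_ones[OF pd \<open>s \<in> seqs k t\<close>, of i j] mult_ones_vec_index[OF Cs_carrier[OF pd] a, of s i j] a
      by simp
  qed
  finally show "(Cxi k t Sig p i j *\<^sub>v ones_vec t) $ a = 0\<^sub>v t $ a" using a by simp
qed (simp add: Cxi_def)


section \<open>Pseudo symmetric measures\<close>

lemma Vxi_carrier: "Vxi k t Sig p \<in> carrier_mat 3 3"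
  by (simp add: Vxi_def)

lemma Cxi_pseudo_symmetric:
  assumes pd: "pos_def_mat k Sig" and t: "t \<ge> 2" and ps: "pseudo_symmetric k t Sig p"
    and "i < 3" "j < 3"
  shows "Cxi k t Sig p i j = (Vxi k t Sig p $$ (i, j) / (real t - 1)) \<cdot>\<^sub>m centering_mat t"
proof -
  have "completely_symmetric t (Cxi k t Sig p i j)"
    using ps assms(4,5) unfolding pseudo_symmetric_def by auto
  from completely_symmetric_eq_centering_mat[OF t this Cxi_mult_ones[OF pd]]
  show ?thesis using assms(4,5) by (simp add: Vxi_def)
qed

lemma Cuw_pseudo_symmetric:
  assumes pd: "pos_def_mat k Sig" and t: "t \<ge> 2" and ps: "pseudo_symmetric k t Sig p"
    and u: "u \<in> carrier_vec 3" and w: "w \<in> carrier_vec 3"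
  shows "Cuw k t Sig p u w = (qform (Vxi k t Sig p) u w / (real t - 1)) \<cdot>\<^sub>m centering_mat t"
proof (rule eq_matI)
  fix a b assume "a < dim_row ((qform (Vxi k t Sig p) u w / (real t - 1)) \<cdot>\<^sub>m centering_mat t)"
    "b < dim_col ((qform (Vxi k t Sig p) u w / (real t - 1)) \<cdot>\<^sub>m centering_mat t)"
  hence a: "a < t" and b: "b < t" by auto
  have "Cuw k t Sig p u w $$ (a, b)
      = (\<Sum>i<3. \<Sum>j<3. u $ i * w $ j * Vxi k t Sig p $$ (i, j)) / (real t - 1) * centering_mat t $$ (a, b)"
    using a b
    by (simp add: Cuw_def Cxi_pseudo_symmetric[OF pd t ps] sum_distrib_right sum_divide_distrib mult.assoc
        del: index_centering_mat)
  thus "Cuw k t Sig p u w $$ (a, b) = ((qform (Vxi k t Sig p) u w / (real t - 1)) \<cdot>\<^sub>m centering_mat t) $$ (a, b)"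
    using a b by (simp add: qform_eq_double_sum[OF Vxi_carrier u w] del: index_centering_mat)
qed (simp_all add: Cuw_def)

lemma Vxi_quadratic_form_nonneg:
  assumes pd: "pos_def_mat k Sig" and p: "is_measure k t p" and u: "u \<in> carrier_vec 3"
  shows "qform (Vxi k t Sig p) u u \<ge> 0"
proof -
  let ?G = "\<lambda>s i r a. Gmat k t s i $$ (r, a)" and ?B = "\<lambda>r q. Btilde k Sig $$ (r, q)"
  let ?Gu = "\<lambda>s r a. \<Sum>i<3. u $ i * ?G s i r a"
  have Cs: "Cs k t Sig s i j $$ (a, a) = (\<Sum>r<k. \<Sum>q<k. ?G s i r a * ?B r q * ?G s j q a)"
    if "a < t" for s i j a
  proof -
    have "Cs k t Sig s i j $$ (a, a) = (\<Sum>r<k. ?G s i r a * (\<Sum>q<k. ?B r q * ?G s j q a))"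
      using that Gmat_carrier[of k t s i] Gmat_carrier[of k t s j] Btilde_carrier[OF pd]
      by (simp add: Cs_def scalar_prod_def lessThan_atLeast0)
    thus ?thesis by (simp add: sum_distrib_left mult.assoc)
  qed
  have "qform (Vxi k t Sig p) u u
      = (\<Sum>i<3. \<Sum>j<3. \<Sum>a<t. \<Sum>s\<in>seqs k t. u $ i * u $ j * (p s * Cs k t Sig s i j $$ (a, a)))"
    unfolding qform_eq_double_sum[OF Vxi_carrier u u]
    by (simp add: Vxi_def mtrace_def Cxi_def sum_distrib_left)
  also have "\<dots> = (\<Sum>a<t. \<Sum>s\<in>seqs k t. p s * (\<Sum>r<k. \<Sum>q<k. ?Gu s r a * ?B r q * ?Gu s q a))"
  proof (subst sum_sum_swap_pairs, rule sum.cong[OF refl], rule sum.cong[OF refl])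
    fix a s assume "a \<in> {..<t}"
    hence "(\<Sum>i<3. \<Sum>j<3. u $ i * u $ j * (p s * Cs k t Sig s i j $$ (a, a)))
        = p s * (\<Sum>i<3. \<Sum>j<3. \<Sum>r<k. \<Sum>q<k. (u $ i * ?G s i r a) * ?B r q * (u $ j * ?G s j q a))"
      by (simp add: Cs sum_distrib_left algebra_simps)
    also have "\<dots> = p s * (\<Sum>r<k. \<Sum>q<k. \<Sum>i<3. \<Sum>j<3. (u $ i * ?G s i r a) * ?B r q * (u $ j * ?G s j q a))"
      by (subst sum_sum_swap_pairs) (rule refl)
    also have "\<dots> = p s * (\<Sum>r<k. \<Sum>q<k. ?Gu s r a * ?B r q * ?Gu s q a)"
    proof -
      have "(\<Sum>i\<in>I. x i) * c * (\<Sum>j\<in>J. y j) = (\<Sum>i\<in>I. \<Sum>j\<in>J. x i * c * y j)"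
        for I J :: "nat set" and x y :: "nat \<Rightarrow> real" and c
        unfolding sum_distrib_right[of x I c] by (rule sum_product)
      thus ?thesis by (simp only:)
    qed
    finally show "(\<Sum>i<3. \<Sum>j<3. u $ i * u $ j * (p s * Cs k t Sig s i j $$ (a, a)))
        = p s * (\<Sum>r<k. \<Sum>q<k. ?Gu s r a * ?B r q * ?Gu s q a)" .
  qed
  also have "\<dots> \<ge> 0"
    by (intro Btilde_quadratic_form_nonneg[OF pd] sum_nonneg mult_nonneg_nonneg)
      (use p in \<open>auto simp: is_measure_def\<close>)
  finally show ?thesis .
qed

lemma Ixi_pseudo_symmetric_contrast:
  assumes pd: "pos_def_mat k Sig" and t: "t \<ge> 2" and ps: "pseudo_symmetric k t Sig p"
    and u: "u \<in> carrier_vec 3" and w: "w \<in> carrier_vec 3" and x: "x \<in> contrasts t"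
  defines "V \<equiv> Vxi k t Sig p"
  shows "Ixi k t Sig p u [w] x = (qform V u u / (real t - 1)) \<cdot>\<^sub>m centering_mat t
    - ((qform V u w)\<^sup>2 * scalar_pinv (qform V w w) / ((real t - 1) * (x \<bullet> x)))
      \<cdot>\<^sub>m mat t t (\<lambda>(a, b). x $ a * x $ b)"
proof -
  have xc: "x \<in> carrier_vec t" and sum_x: "(\<Sum>i<t. x $ i) = 0" using x by (auto simp: contrasts_def)
  have xx: "x \<bullet> x > 0" by (rule contrast_scalar_prod_pos[OF x])
  have scaled: "(c \<cdot>\<^sub>m centering_mat t) *\<^sub>v x = c \<cdot>\<^sub>v x" for c
  proof (rule eq_vecI)
    fix a assume "a < dim_vec (c \<cdot>\<^sub>v x)"
    hence a: "a < t" using xc by simp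
    have "((c \<cdot>\<^sub>m centering_mat t) *\<^sub>v x) $ a = c * (centering_mat t *\<^sub>v x) $ a"
      using a xc by (simp add: scalar_prod_def sum_distrib_left mult.assoc lessThan_atLeast0)
    thus "((c \<cdot>\<^sub>m centering_mat t) *\<^sub>v x) $ a = (c \<cdot>\<^sub>v x) $ a"
      using a xc by (simp add: centering_mat_mult_vec[OF xc sum_x])
  qed (use xc in simp)
  have C: "Cuw k t Sig p z z' = (qform V z z' / (real t - 1)) \<cdot>\<^sub>m centering_mat t"
    and Cx: "Cuw k t Sig p z z' *\<^sub>v x = (qform V z z' / (real t - 1)) \<cdot>\<^sub>v x"
    if "z \<in> carrier_vec 3" "z' \<in> carrier_vec 3" for z z'
    using Cuw_pseudo_symmetric[OF pd t ps that] xc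
    by (simp_all add: V_def scaled)
  define \<kappa> \<gamma> where "\<kappa> = qform V u w / (real t - 1)" and "\<gamma> = qform V w w / (real t - 1)"
  have one: "\<And>i. i < (1::nat) \<longleftrightarrow> i = 0" by auto
  have F: "mat (length [w]) t (\<lambda>(a, c). (Cuw k t Sig p u ([w] ! a) *\<^sub>v x) $ c) = mat 1 t (\<lambda>(_, c). \<kappa> * x $ c)"
    using Cx[OF u w] xc by (intro eq_matI) (auto simp: one \<kappa>_def)
  have G: "mat (length [w]) (length [w]) (\<lambda>(a, b). x \<bullet> (Cuw k t Sig p ([w] ! a) ([w] ! b) *\<^sub>v x))
      = mat 1 1 (\<lambda>_. \<gamma> * (x \<bullet> x))"
    using Cx[OF w w] xc by (intro eq_matI) (auto simp: one \<gamma>_def)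
  define e where "e = (qform V u w)\<^sup>2 * scalar_pinv (qform V w w) / ((real t - 1) * (x \<bullet> x))"
  have coeff: "e = \<kappa> * \<kappa> * scalar_pinv (\<gamma> * (x \<bullet> x))"
  proof -
    obtain d where d: "d = real t - 1" "d > 0" using t by simp
    show ?thesis
      using xx unfolding e_def \<kappa>_def \<gamma>_def d(1)[symmetric]
      by (cases "qform V w w = 0") (use d in \<open>simp_all add: scalar_pinv_def power2_eq_square field_simps\<close>)
  qed
  show ?thesis
    unfolding Ixi_def Let_def F G mp_inverse_1x1 C[OF u u] e_def[symmetric]
    using xc by (intro eq_matI) (auto simp: coeff scalar_prod_def one algebra_simps)
qed

lemma ell_carrier: "ell lam \<in> carrier_vec 3" "ell3 \<in> carrier_vec 3"
  by (simp_all only: ell_def ell3_def carrier_vec_def mem_Collect_eq dim_vec_of_list, simp_all)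

theorem proposition6:
  fixes k t :: nat and Sig :: "real mat" and p :: "nat list \<Rightarrow> real" and lam :: real
  assumes "k \<ge> 2" and "t \<ge> 2"
    and "pos_def_mat k Sig"
    and "1 + 2 * lam \<noteq> 0"
    and "pseudo_symmetric k t Sig p"
  defines "V \<equiv> Vxi k t Sig p"
  defines "Q3 \<equiv> qform V ell3 ell3"
  defines "qstar \<equiv> qform V (ell lam) (ell lam) - (qform V (ell lam) ell3)^2 * scalar_pinv Q3"
  shows "(\<forall>theta \<in> contrasts t.
           char_poly (Ctilde k t Sig p lam theta) =
             [:0, 1:]
             * [:- (qstar / ((1 + 2 * lam)^2 * (real t - 1))), 1:]
             * [:- (qform V (ell lam) (ell lam) / ((1 + 2 * lam)^2 * (real t - 1))), 1:] ^ (t - 2))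
         \<and> qstar \<le> qform V (ell lam) (ell lam)"
proof (intro conjI ballI)
  fix x assume x: "x \<in> contrasts t"
  have xc: "x \<in> carrier_vec t" and sum_x: "(\<Sum>i<t. x $ i) = 0" using x by (auto simp: contrasts_def)
  define c where "c = 1 / (1 + 2 * lam)\<^sup>2"
  define e where "e = (qform V (ell lam) ell3)\<^sup>2 * scalar_pinv Q3 / ((real t - 1) * (x \<bullet> x))"
  have Ct: "Ctilde k t Sig p lam x = (c * (qform V (ell lam) (ell lam) / (real t - 1))) \<cdot>\<^sub>m centering_mat t
      - (c * e) \<cdot>\<^sub>m mat t t (\<lambda>(a, b). x $ a * x $ b)"
    unfolding Ctilde_def Ixi_pseudo_symmetric_contrast[OF assms(3,2,5) ell_carrier x]
    by (intro eq_matI) (auto simp: V_def Q3_def e_def c_def right_diff_distrib mult.assoc)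
  have "e * (x \<bullet> x) = (qform V (ell lam) ell3)\<^sup>2 * scalar_pinv Q3 / (real t - 1)"
    using contrast_scalar_prod_pos[OF x] by (simp add: e_def)
  hence "[:- (c * (qform V (ell lam) (ell lam) / (real t - 1)) - c * e * (x \<bullet> x)), 1:]
      = [:- (qstar / ((1 + 2 * lam)\<^sup>2 * (real t - 1))), 1:]"
    by (simp add: c_def qstar_def diff_divide_distrib mult.assoc)
  moreover have "[:- (c * (qform V (ell lam) (ell lam) / (real t - 1))), 1:]
      = [:- (qform V (ell lam) (ell lam) / ((1 + 2 * lam)\<^sup>2 * (real t - 1))), 1:]"
    by (simp add: c_def)
  ultimately show "char_poly (Ctilde k t Sig p lam x) =
             [:0, 1:]
             * [:- (qstar / ((1 + 2 * lam)^2 * (real t - 1))), 1:]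
             * [:- (qform V (ell lam) (ell lam) / ((1 + 2 * lam)^2 * (real t - 1))), 1:] ^ (t - 2)"
    unfolding Ct char_poly_centering_minus_rank_one[OF assms(2) xc sum_x] by (simp only:)
next
  have "Q3 \<ge> 0"
    using Vxi_quadratic_form_nonneg[OF assms(3) _ ell_carrier(2)] assms(5)
    by (simp add: Q3_def V_def pseudo_symmetric_def)
  thus "qstar \<le> qform V (ell lam) (ell lam)" by (simp add: qstar_def scalar_pinv_def)
qed

end
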